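(* For every integer $Q \ge 2$, let $F_Q = \{a/q : 1 \le a \le q \le Q,\ \gcd(a,q) = 1\}$ be the $Q$-th Farey sequence, with elements listed in increasing order as $\gamma_1 < \gamma_2 < \cdots < \gamma_{N}$, where $N = |F_Q|$. Define $$S_2(Q) = \sum_{j=1}^{N-1} (\gamma_{j+1} - \gamma_j)^2 \quad\text{and}\quad C(Q) = \frac{S_2(Q)\, Q^2}{\log Q}.$$ Then $C(Q) < 3$ for all integers $Q > 1$.
   Context: $\log$ denotes the natural logarithm. *)

theory Defs
  imports "HOL-Analysis.Analysis"
begin

definition farey :: "nat \<Rightarrow> rat set" where
  "farey Q = {Fract (int a) (int q) | a q. 1 \<le> a \<and> a \<le> q \<and> q \<le> Q \<and> coprime a q}"

text \<open>Elements in increasing order: gamma_1 < ... < gamma_N (0-indexed list here).\<close>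
definition farey_list :: "nat \<Rightarrow> rat list" where
  "farey_list Q = sorted_list_of_set (farey Q)"

definition S2 :: "nat \<Rightarrow> real" where
  "S2 Q = (let g = farey_list Q; N = length g in
     (\<Sum>j = 1..N - 1. (of_rat (g ! j) - of_rat (g ! (j - 1)))^2))"

definition C :: "nat \<Rightarrow> real" where
  "C Q = S2 Q * (real Q)^2 / ln (real Q)"

end

theory Submission
  imports Defs "HOL-Number_Theory.Cong"
begin

text \<open>
  For x = a/q < 1 in F_Q choose d with Q - q < d \<le> Q and a d \<equiv> -1 (mod q). Then
  x + 1/(q d) = ((a d + 1)/q)/d again lies in F_Q, so the gap following x is at most 1/(q d),
  and the pair (q, d) determines x. Hence S_2(Q) is at most the sum of 1/(q d)^2 over
  2 \<le> q \<le> Q and Q - q < d \<le> Q. Comparing 1/d^2 with 1/(d - 1/2) - 1/(d + 1/2) telescopes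
  the inner sum to at most (1/q + 1/(R - q))/R^2 with R = Q + 1/2, and both sums over q are
  log Q + O(1). This gives Q^2 S_2(Q) \<le> (Q/R)^2 (log Q + log (Q - 1) + 2), which stays
  below 3 log Q.
\<close>

lemma finite_farey: "finite (farey Q)"
proof -
  have "farey Q \<subseteq> (\<lambda>(a, q). Fract (int a) (int q)) ` ({..Q} \<times> {..Q})"
    unfolding farey_def by auto
  then show ?thesis
    by (rule finite_subset) auto
qed

lemma farey_subset_greaterThanAtMost: "farey Q \<subseteq> {0<..1}"
  unfolding farey_def by (auto simp: Fract_of_int_quotient)

lemma quotient_of_farey:
  assumes "x \<in> farey Q" and "quotient_of x = (a, q)"
  shows "1 \<le> a" and "a \<le> q" and "q \<le> int Q"
proof -
  obtain a' q' where x: "x = Fract (int a') (int q')"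
    and a'q': "1 \<le> a'" "a' \<le> q'" "q' \<le> Q" "coprime a' q'"
    using assms(1) unfolding farey_def by blast
  then have "quotient_of x = (int a', int q')"
    by (simp add: quotient_of_Fract)
  with assms(2) a'q' show "1 \<le> a" "a \<le> q" "q \<le> int Q"
    by auto
qed

lemma Fract_in_farey:
  assumes "1 \<le> b" and "b \<le> d" and "d \<le> int Q"
  shows "Fract b d \<in> farey Q"
proof -
  obtain b' d' where q: "quotient_of (Fract b d) = (b', d')"
    by (cases "quotient_of (Fract b d)")
  define g where "g = gcd b d"
  have g: "g > 0" and b: "b = b' * g" and d: "d = d' * g"
    using q assms unfolding g_def by (auto simp: quotient_of_Fract normalize_def Let_def)
  have "coprime b' d'"
    using q by (rule quotient_of_coprime)
  have Fract: "Fract b d = Fract b' d'"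
    using Fract_quotient_of[of "Fract b d"] by (simp add: q)
  have "b' > 0"
    using assms(1) g mult_nonpos_nonneg[of b' g] unfolding b by linarith
  moreover have "b' \<le> d'"
    using assms(2) g unfolding b d by simp
  moreover have "d' \<le> d"
    using \<open>b' > 0\<close> \<open>b' \<le> d'\<close> g unfolding d by simp
  ultimately have "Fract b d = Fract (int (nat b')) (int (nat d'))"
    and "1 \<le> nat b'" and "nat b' \<le> nat d'" and "nat d' \<le> Q"
    using assms(3) Fract by auto
  moreover have "coprime (nat b') (nat d')"
    using \<open>coprime b' d'\<close> \<open>b' > 0\<close> \<open>b' \<le> d'\<close> by (simp add: coprime_int_iff[symmetric])
  ultimately show ?thesis
    unfolding farey_def by blast
qed

lemma cong_representative_in_interval:
  fixes c q Q :: int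
  assumes "q > 0"
  obtains d where "Q - q < d" and "d \<le> Q" and "[d = c] (mod q)"
proof
  have "Q - (Q - c) mod q - c = q * ((Q - c) div q)"
    using minus_mod_eq_mult_div[of "Q - c" q] by linarith
  then show "[Q - (Q - c) mod q = c] (mod q)"
    by (simp add: cong_iff_dvd_diff)
qed (use assms in auto)

lemma dvd_mult_add_1_solution_in_interval:
  fixes a q Q :: int
  assumes "coprime a q" and "q > 0"
  obtains d where "Q - q < d" and "d \<le> Q" and "q dvd a * d + 1"
proof -
  obtain u where u: "[a * u = 1] (mod q)"
    using cong_solve_coprime_int assms(1) by blast
  obtain d where d: "Q - q < d" "d \<le> Q" "[d = - u] (mod q)"
    using cong_representative_in_interval assms(2) by blast
  have "[a * d + 1 = - (a * u) + 1] (mod q)"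
    using d(3) by (intro cong_add cong_refl) (auto dest: cong_scalar_left[of _ _ _ a])
  also have "[- (a * u) + 1 = - 1 + 1] (mod q)"
    using u by (intro cong_add cong_refl) (simp add: cong_minus_minus_iff)
  finally have "q dvd a * d + 1"
    by (simp add: cong_0_iff)
  with d that show ?thesis
    by blast
qed

lemma dvd_mult_add_1_imp_coprime:
  fixes a d q :: int
  assumes "q dvd a * d + 1"
  shows "coprime d q"
proof (rule coprimeI)
  fix e
  assume "e dvd d" and "e dvd q"
  then have "e dvd a * d + 1" and "e dvd a * d"
    using assms by auto
  then show "is_unit e"
    by (simp add: dvd_add_right_iff)
qed

lemma dvd_mult_add_1_imp_eq:
  fixes a a' d q :: int
  assumes "q dvd a * d + 1" and "q dvd a' * d + 1"
    and "0 \<le> a" and "a < q" and "0 \<le> a'" and "a' < q"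
  shows "a = a'"
proof -
  have "[a * d = a' * d] (mod q)"
    using dvd_diff[OF assms(1,2)] by (simp add: cong_iff_dvd_diff)
  then have "[a = a'] (mod q)"
    using dvd_mult_add_1_imp_coprime[OF assms(1)] by (simp add: cong_mult_rcancel)
  then show ?thesis
    by (rule cong_less_imp_eq_int[OF assms(3-6)])
qed

lemma quotient_of_less_1:
  assumes "quotient_of x = (a, q)" and "x < 1"
  shows "a < q"
proof -
  have "q > 0"
    using quotient_of_denom_pos assms(1) .
  moreover have "(of_int a / of_int q :: rat) < 1"
    using assms quotient_of_div by metis
  ultimately show ?thesis
    by (simp add: divide_less_eq)
qed

lemma farey_add_unit_fraction:
  fixes a q d :: int
  assumes "1 \<le> a" and "a < q" and "1 \<le> d" and "d \<le> int Q" and "q dvd a * d + 1"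
  shows "of_int a / of_int q + 1 / (of_int q * of_int d) \<in> farey Q"
proof -
  obtain b where b: "a * d + 1 = q * b"
    using assms(5) by (elim dvdE)
  have "q * b > 0"
    using assms(1,3) unfolding b[symmetric] by (simp add: add_pos_nonneg)
  then have "1 \<le> b"
    using assms(1,2) by (simp add: zero_less_mult_iff)
  have "q * b \<le> q * d"
    using assms(2,3) mult_right_mono[of a "q - 1" d] unfolding b[symmetric] by (simp add: algebra_simps)
  then have "b \<le> d"
    using assms(1,2) by simp
  have "of_int a / of_int q + 1 / (of_int q * of_int d) = (of_int (a * d + 1) / of_int (q * d) :: rat)"
    using assms(1-3) by (simp add: field_simps)
  also have "\<dots> = Fract b d"
    using assms(1-3) by (simp add: b Fract_of_int_quotient)
  finally show ?thesis
    using Fract_in_farey[OF \<open>1 \<le> b\<close> \<open>b \<le> d\<close> assms(4)] by simp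
qed

text \<open>
  For x < 1 this is the denominator of the successor of x in F_Q, but only the weaker fact
  that x + 1/(q d) lies in F_Q is needed below.
\<close>

definition farey_next_denom :: "nat \<Rightarrow> rat \<Rightarrow> int" where
  "farey_next_denom Q x =
     (let (a, q) = quotient_of x in SOME d. int Q - q < d \<and> d \<le> int Q \<and> q dvd a * d + 1)"

lemma farey_next_denom:
  assumes "x \<in> farey Q" and "quotient_of x = (a, q)"
  shows "int Q - q < farey_next_denom Q x" and "farey_next_denom Q x \<le> int Q"
    and "q dvd a * farey_next_denom Q x + 1"
proof -
  have "\<exists>d. int Q - q < d \<and> d \<le> int Q \<and> q dvd a * d + 1"
    using dvd_mult_add_1_solution_in_interval quotient_of_coprime quotient_of_denom_pos assms(2)
    by metis
  then have "int Q - q < farey_next_denom Q x \<and> farey_next_denom Q x \<le> int Q \<and>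
      q dvd a * farey_next_denom Q x + 1"
    unfolding farey_next_denom_def assms(2) Let_def prod.case by (rule someI_ex)
  then show "int Q - q < farey_next_denom Q x" and "farey_next_denom Q x \<le> int Q"
    and "q dvd a * farey_next_denom Q x + 1"
    by auto
qed

definition farey_gap_pair :: "nat \<Rightarrow> rat \<Rightarrow> nat \<times> nat" where
  "farey_gap_pair Q x = (nat (snd (quotient_of x)), nat (farey_next_denom Q x))"

lemma farey_gap_pair_mem:
  assumes "x \<in> farey Q" and "x < 1"
  shows "farey_gap_pair Q x \<in> Sigma {2..Q} (\<lambda>q. {Q + 1 - q..Q})"
proof -
  obtain a q where x: "quotient_of x = (a, q)"
    by (cases "quotient_of x")
  have "1 \<le> a" "a < q" "q \<le> int Q"
    using quotient_of_farey[OF assms(1) x] quotient_of_less_1[OF x assms(2)] by auto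
  with farey_next_denom[OF assms(1) x] show ?thesis
    unfolding farey_gap_pair_def x by auto
qed

lemma inj_on_farey_gap_pair: "inj_on (farey_gap_pair Q) {x \<in> farey Q. x < 1}"
proof (rule inj_onI, clarsimp)
  fix x y
  assume x: "x \<in> farey Q" "x < 1" and y: "y \<in> farey Q" "y < 1"
    and eq: "farey_gap_pair Q x = farey_gap_pair Q y"
  obtain a q where qx: "quotient_of x = (a, q)"
    by (cases "quotient_of x")
  obtain a' q' where qy: "quotient_of y = (a', q')"
    by (cases "quotient_of y")
  have "1 \<le> a" "a < q" "q \<le> int Q" "1 \<le> a'" "a' < q'" "q' \<le> int Q"
    using quotient_of_farey(1,3) quotient_of_less_1 x y qx qy by blast+
  moreover note dx = farey_next_denom[OF x(1) qx] and dy = farey_next_denom[OF y(1) qy]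
  ultimately have "q = q'" and "farey_next_denom Q x = farey_next_denom Q y"
    using eq unfolding farey_gap_pair_def qx qy by (auto simp: eq_nat_nat_iff)
  then have "a = a'"
    using dx(3) dy(3) \<open>1 \<le> a\<close> \<open>a < q\<close> \<open>1 \<le> a'\<close> \<open>a' < q'\<close>
    by (intro dvd_mult_add_1_imp_eq[of q a "farey_next_denom Q x" a']) auto
  then show "x = y"
    using qx qy \<open>q = q'\<close> quotient_of_inject by metis
qed

lemma farey_gap_le:
  assumes x: "x \<in> farey Q" "x < 1" and y: "y \<in> farey Q"
    and next_x: "\<And>z. z \<in> farey Q \<Longrightarrow> x < z \<Longrightarrow> y \<le> z"
    and "farey_gap_pair Q x = (q, d)"
  shows "y - x \<le> 1 / (of_nat q * of_nat d)"
proof -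
  obtain a q' where qx: "quotient_of x = (a, q')"
    by (cases "quotient_of x")
  define d' where "d' = farey_next_denom Q x"
  have a: "1 \<le> a" "a < q'"
    using quotient_of_farey(1) quotient_of_less_1 x qx by blast+
  have d': "int Q - q' < d'" "d' \<le> int Q" "q' dvd a * d' + 1"
    using farey_next_denom[OF x(1) qx] unfolding d'_def by auto
  have "q' \<le> int Q"
    using quotient_of_farey(3)[OF x(1) qx] .
  then have q_d: "q' = int q" "d' = int d"
    using assms(5) a d' unfolding farey_gap_pair_def qx d'_def[symmetric] by auto
  have "x + 1 / (of_int q' * of_int d') \<in> farey Q"
    using farey_add_unit_fraction[of a q' d' Q] a d' \<open>q' \<le> int Q\<close> quotient_of_div[OF qx] by simp
  moreover have "x < x + 1 / (of_int q' * of_int d')"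
    using a d' \<open>q' \<le> int Q\<close> by simp
  ultimately have "y \<le> x + 1 / (of_int q' * of_int d')"
    by (rule next_x)
  then show ?thesis
    by (simp add: q_d)
qed

lemma sorted_nth_Suc_le:
  fixes xs :: "'a :: linorder list"
  assumes "sorted xs" and "Suc j < length xs" and "z \<in> set xs" and "xs ! j < z"
  shows "xs ! Suc j \<le> z"
proof -
  obtain i where i: "i < length xs" "z = xs ! i"
    using assms(3) by (metis in_set_conv_nth)
  have "\<not> i \<le> j"
    using assms(2,4) i sorted_nth_mono[OF assms(1), of i j] by auto
  then show ?thesis
    using i sorted_nth_mono[OF assms(1), of "Suc j" i] by simp
qed

lemma S2_le_sum_farey_gap_pair:
  "S2 Q \<le> (\<Sum>x | x \<in> farey Q \<and> x < 1. case farey_gap_pair Q x of (q, d) \<Rightarrow> 1 / (real q * real d)^2)"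
    (is "_ \<le> (\<Sum>x\<in>?F. ?w x)")
proof -
  define g where "g = farey_list Q"
  define N where "N = length g"
  have set_g: "set g = farey Q" and sorted_g: "sorted_wrt (<) g"
    unfolding g_def farey_list_def using finite_farey by auto
  have mem: "g ! j \<in> farey Q" if "j < N" for j
    using that set_g unfolding N_def by (metis nth_mem)
  have less: "g ! j < g ! Suc j" if "Suc j < N" for j
    using that sorted_g unfolding N_def by (simp add: sorted_wrt_iff_nth_less)
  have below_1: "g ! j < 1" if "Suc j < N" for j
    using less[OF that] mem[OF that] farey_subset_greaterThanAtMost by fastforce
  have gap_le: "(of_rat (g ! Suc j) - of_rat (g ! j))^2 \<le> ?w (g ! j)" if "Suc j < N" for j
  proof -
    obtain q d where qd: "farey_gap_pair Q (g ! j) = (q, d)"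
      by (cases "farey_gap_pair Q (g ! j)")
    have "g ! Suc j - g ! j \<le> 1 / (of_nat q * of_nat d)"
      using that mem below_1 qd set_g sorted_nth_Suc_le[OF strict_sorted_imp_sorted[OF sorted_g], of j]
      unfolding N_def by (intro farey_gap_le) auto
    then have "(of_rat (g ! Suc j - g ! j) :: real) \<le> of_rat (1 / (of_nat q * of_nat d))"
      by (simp only: of_rat_less_eq)
    then have "of_rat (g ! Suc j) - of_rat (g ! j) \<le> 1 / (real q * real d)"
      by (simp add: of_rat_diff of_rat_divide of_rat_mult)
    moreover have "0 \<le> of_rat (g ! Suc j) - (of_rat (g ! j) :: real)"
      using less[OF that] by (simp add: of_rat_less_eq)
    ultimately have "(of_rat (g ! Suc j) - of_rat (g ! j))^2 \<le> (1 / (real q * real d))^2"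
      by (rule power_mono)
    then show ?thesis
      unfolding qd by (simp add: power_one_over)
  qed
  have "S2 Q = (\<Sum>j<N - 1. (of_rat (g ! Suc j) - of_rat (g ! j))^2)"
    unfolding S2_def g_def N_def Let_def
    by (rule sum.reindex_bij_witness[where i = Suc and j = "\<lambda>j. j - 1"]) auto
  also have "\<dots> \<le> (\<Sum>j<N - 1. ?w (g ! j))"
    using gap_le by (intro sum_mono) auto
  also have "\<dots> = (\<Sum>x\<in>(!) g ` {..<N - 1}. ?w x)"
    using sorted_g unfolding N_def by (subst sum.reindex) (auto intro!: inj_on_nth simp: strict_sorted_iff)
  also have "\<dots> \<le> (\<Sum>x\<in>?F. ?w x)"
    using below_1 mem finite_farey by (intro sum_mono2) (auto split: prod.split)
  finally show ?thesis .
qed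

lemma sum_farey_gap_pair_le:
  "(\<Sum>x | x \<in> farey Q \<and> x < 1. case farey_gap_pair Q x of (q, d) \<Rightarrow> 1 / (real q * real d)^2)
     \<le> (\<Sum>q = 2..Q. \<Sum>d = Q + 1 - q..Q. 1 / (real q * real d)^2)"
proof -
  let ?w = "\<lambda>(q, d). 1 / (real q * real d)^2"
  have "(\<Sum>x | x \<in> farey Q \<and> x < 1. ?w (farey_gap_pair Q x))
      = (\<Sum>p \<in> farey_gap_pair Q ` {x \<in> farey Q. x < 1}. ?w p)"
    using inj_on_farey_gap_pair by (simp add: sum.reindex)
  also have "\<dots> \<le> (\<Sum>p \<in> Sigma {2..Q} (\<lambda>q. {Q + 1 - q..Q}). ?w p)"
  proof (rule sum_mono2)
    show "farey_gap_pair Q ` {x \<in> farey Q. x < 1} \<subseteq> Sigma {2..Q} (\<lambda>q. {Q + 1 - q..Q})"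
      using farey_gap_pair_mem by blast
  qed auto
  also have "\<dots> = (\<Sum>q = 2..Q. \<Sum>d = Q + 1 - q..Q. 1 / (real q * real d)^2)"
    by (simp add: sum.Sigma)
  finally show ?thesis .
qed

lemma inverse_square_le_diff:
  fixes t :: real
  assumes "t > 1/2"
  shows "1 / t^2 \<le> 1 / (t - 1/2) - 1 / (t + 1/2)"
proof -
  have "t^2 - 1/4 = (t - 1/2) * (t + 1/2)"
    by (simp add: algebra_simps power2_eq_square)
  also have "\<dots> > 0"
    using assms by simp
  finally have "1 / t^2 \<le> 1 / (t^2 - 1/4)"
    using assms by (intro divide_left_mono mult_pos_pos) auto
  also have "\<dots> = 1 / (t - 1/2) - 1 / (t + 1/2)"
    using assms by (simp add: field_simps power2_eq_square)
  finally show ?thesis .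
qed

lemma sum_inverse_squares_le:
  assumes "1 \<le> m" and "m \<le> n"
  shows "(\<Sum>d = m..n. 1 / (real d)^2) \<le> 1 / (real m - 1/2) - 1 / (real n + 1/2)"
  using assms(2)
proof (induction n rule: dec_induct)
  case base
  then show ?case
    using assms(1) inverse_square_le_diff[of "real m"] by simp
next
  case (step n)
  have "(\<Sum>d = m..Suc n. 1 / (real d)^2) = (\<Sum>d = m..n. 1 / (real d)^2) + 1 / (real (Suc n))^2"
    using step by simp
  also have "\<dots> \<le> (1 / (real m - 1/2) - 1 / (real n + 1/2))
      + (1 / (real (Suc n) - 1/2) - 1 / (real (Suc n) + 1/2))"
    using step.IH inverse_square_le_diff[of "real (Suc n)"] by (intro add_mono) auto
  also have "\<dots> = 1 / (real m - 1/2) - 1 / (real (Suc n) + 1/2)"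
    by (simp add: algebra_simps)
  finally show ?case .
qed

lemma sum_inverse_midpoints_le_ln: "(\<Sum>k = 1..n. 1 / (real k + 1/2)) \<le> ln (real n + 1)"
proof (induction n)
  case 0
  then show ?case
    by simp
next
  case (Suc n)
  have "2 * (real n + 2 - (real n + 1)) / (real n + 1 + (real n + 2)) \<le> ln (real n + 2) - ln (real n + 1)"
    by (intro ln_inverse_approx_ge) auto
  then have "1 / (real (Suc n) + 1/2) \<le> ln (real (Suc n) + 1) - ln (real n + 1)"
    by (simp add: field_simps)
  with Suc show ?case
    by simp
qed

lemma sum_inverse_le_ln:
  assumes "1 \<le> Q"
  shows "(\<Sum>q = 2..Q. 1 / real q) \<le> ln (real Q)"
proof -
  have "harm Q = 1 + (\<Sum>q = 2..Q. 1 / real q)"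
    using assms unfolding harm_def by (simp add: sum.atLeast_Suc_atMost inverse_eq_divide numeral_2_eq_2)
  moreover have "harm Q - ln (real Q) \<le> (1 :: real)"
    using euler_mascheroni_sequence_decreasing[of 1 Q] assms by (simp add: harm_def)
  ultimately show ?thesis
    by simp
qed

lemma sum_inverse_reflected_le_ln:
  assumes "2 \<le> Q"
  shows "(\<Sum>q = 2..Q. 1 / (real Q + 1/2 - real q)) \<le> 2 + ln (real Q - 1)"
proof -
  have "(\<Sum>q = 2..Q. 1 / (real Q + 1/2 - real q)) = (\<Sum>k = 0..Q - 2. 1 / (real k + 1/2))"
    using assms
    by (intro sum.reindex_bij_witness[where i = "\<lambda>k. Q - k" and j = "\<lambda>q. Q - q"]) auto
  also have "\<dots> = 2 + (\<Sum>k = 1..Q - 2. 1 / (real k + 1/2))"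
    by (simp add: sum.atLeast_Suc_atMost)
  also have "\<dots> \<le> 2 + ln (real Q - 1)"
    using sum_inverse_midpoints_le_ln[of "Q - 2"] assms by simp
  finally show ?thesis .
qed

lemma sum_gap_pairs_le:
  assumes "2 \<le> Q"
  shows "(\<Sum>q = 2..Q. \<Sum>d = Q + 1 - q..Q. 1 / (real q * real d)^2)
    \<le> (ln (real Q) + 2 + ln (real Q - 1)) / (real Q + 1/2)^2"
proof -
  define R where "R = real Q + 1/2"
  have inner: "(\<Sum>d = Q + 1 - q..Q. 1 / (real q * real d)^2) \<le> (1 / real q + 1 / (R - real q)) / R^2"
    if q: "q \<in> {2..Q}" for q
  proof -
    have "R - real q > 0" "real q > 0"
      using q unfolding R_def by auto
    have "(\<Sum>d = Q + 1 - q..Q. 1 / (real q * real d)^2) = (\<Sum>d = Q + 1 - q..Q. 1 / (real d)^2) / (real q)^2"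
      by (simp add: sum_divide_distrib power_mult_distrib mult.commute)
    also have "\<dots> \<le> (1 / (R - real q) - 1 / R) / (real q)^2"
      using sum_inverse_squares_le[of "Q + 1 - q" Q] q
      by (intro divide_right_mono) (auto simp: R_def algebra_simps)
    also have "\<dots> = (1 / real q + 1 / (R - real q)) / R^2" \<comment> \<open>both sides equal 1/(q (R - q) R)\<close>
      using \<open>R - real q > 0\<close> \<open>real q > 0\<close> by (simp add: field_simps power2_eq_square)
    finally show ?thesis .
  qed
  have "(\<Sum>q = 2..Q. \<Sum>d = Q + 1 - q..Q. 1 / (real q * real d)^2)
      \<le> (\<Sum>q = 2..Q. (1 / real q + 1 / (R - real q)) / R^2)"
    using inner by (rule sum_mono)
  also have "\<dots> = ((\<Sum>q = 2..Q. 1 / real q) + (\<Sum>q = 2..Q. 1 / (R - real q))) / R^2"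
    by (simp only: sum_divide_distrib[symmetric] sum.distrib[symmetric])
  also have "\<dots> \<le> (ln (real Q) + (2 + ln (real Q - 1))) / R^2"
    using sum_inverse_le_ln[of Q] sum_inverse_reflected_le_ln[OF assms] assms
    unfolding R_def by (intro divide_right_mono add_mono) auto
  finally show ?thesis
    by (simp add: R_def add.assoc)
qed

lemma sq_mult_ln_sum_less_3_ln:
  assumes "2 \<le> Q"
  shows "(real Q)^2 * (ln (real Q) + 2 + ln (real Q - 1)) < 3 * ln (real Q) * (real Q + 1/2)^2"
proof (cases "Q = 2")
  case True
  then show ?thesis
    using ln2_ge_two_thirds by (simp add: power2_eq_square)
next
  case False
  define x where "x = real Q"
  define L where "L = ln x"
  have x: "x \<ge> 3"
    using assms False unfolding x_def by simp
  have "ln (real Q - 1) \<le> L"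
    using x unfolding L_def x_def by simp
  \<comment> \<open>the lower bound ln x \<ge> 2(x - 1)/(x + 1) turns the claim into a polynomial inequality\<close>
  have "2 * (x - 1) / (1 + x) \<le> L"
    using ln_inverse_approx_ge[of 1 x] x unfolding L_def by simp
  then have L: "2 * (x - 1) \<le> L * (x + 1)"
    using x by (simp add: field_simps)
  have "2 * x^2 * (x + 1) < 2 * (x - 1) * (x^2 + 3 * x + 3/4)"
  proof -
    have "x * x \<ge> 3 * x"
      using x by (intro mult_right_mono) auto
    then have "x^2 - 9/4 * x - 3/4 > 0"
      using x unfolding power2_eq_square by linarith
    then show ?thesis
      by (simp add: algebra_simps power2_eq_square power3_eq_cube)
  qed
  also have "\<dots> \<le> L * (x + 1) * (x^2 + 3 * x + 3/4)"
    using L x by (intro mult_right_mono) auto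
  finally have "2 * x^2 < L * (x^2 + 3 * x + 3/4)"
    using x by (simp add: mult.commute mult.left_commute)
  then show ?thesis
    using mult_left_mono[OF \<open>ln (real Q - 1) \<le> L\<close>, of "x^2"]
    unfolding x_def[symmetric] L_def[symmetric] by (simp add: algebra_simps power2_eq_square)
qed

theorem theorem1:
  fixes Q :: nat
  assumes "Q > 1"
  shows "C Q < 3"
proof -
  have Q: "2 \<le> Q"
    using assms by simp
  have "S2 Q \<le> (ln (real Q) + 2 + ln (real Q - 1)) / (real Q + 1/2)^2"
    using S2_le_sum_farey_gap_pair sum_farey_gap_pair_le sum_gap_pairs_le[OF Q] by (meson order_trans)
  then have "S2 Q * (real Q)^2 \<le> (ln (real Q) + 2 + ln (real Q - 1)) / (real Q + 1/2)^2 * (real Q)^2"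
    by (rule mult_right_mono) simp
  also have "\<dots> < 3 * ln (real Q)"
    using sq_mult_ln_sum_less_3_ln[OF Q] by (simp add: divide_less_eq mult.commute)
  finally show ?thesis
    using Q unfolding C_def by (simp add: divide_less_eq)
qed

end
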